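(* The map on inversion sequences given by Algorithm A (described below) is an involution: if $\epsilon$ is an inversion sequence, $\epsilon'$ is the result of applying Algorithm A to $\epsilon$, and $\epsilon''$ is the result of applying Algorithm A to $\epsilon'$, then $\epsilon''=\epsilon$.
   Context: An inversion sequence of length $n$ is an integer sequence with $0\le\epsilon_i<i$ for all $i$. The reduction of an integer word replaces each occurrence of its $k$-th smallest distinct value by $k-1$; a consecutive pattern $\underline{p_1p_2p_3p_4}$ occurs in a sequence at position $i$ if the reduction of its entries in positions $i,\dots,i+3$ equals $p_1p_2p_3p_4$. Let $p=\underline{0102}$ and $q=\underline{0112}$. Algorithm A, on input an integer sequence $\mathrm{seq}=\epsilon_1\cdots\epsilon_n$: let $E_p$, $E_q$ be the sets of positions of occurrences of $p$, resp. $q$, in the input sequence; set $\mathrm{last}:=$ null. For $i=1,2,\dots,n$ in order: let $N_p,N_q$ be the sets of positions of occurrences of $p$, resp. $q$, in the current sequence. If $i-2\in E_p$: set $\mathrm{last}:=\mathrm{seq}[i]$ and $\mathrm{seq}[i]:=\mathrm{seq}[i-1]$. Else if $i-2\in E_q$: set $\mathrm{last}:=\mathrm{seq}[i]$ and $\mathrm{seq}[i]:=\mathrm{seq}[i-2]$. Else if $i-2\in N_p$ or $i-2\in N_q$: swap the values of $\mathrm{seq}[i]$ and $\mathrm{last}$. Output $\mathrm{seq}$. *)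

theory Defs
  imports Main
begin

text \<open>Sequences are lists of naturals; paper positions are 1-indexed,
  position i corresponds to list index i - 1.\<close>

definition inversion_seq :: "nat list \<Rightarrow> bool" where
  "inversion_seq e \<longleftrightarrow> (\<forall>i < length e. e ! i < i + 1)"

definition reduce :: "nat list \<Rightarrow> nat list" where
  "reduce w = map (\<lambda>x. card {y \<in> set w. y < x}) w"

definition occurs_at :: "nat list \<Rightarrow> nat list \<Rightarrow> nat \<Rightarrow> bool" where
  "occurs_at pat s i \<longleftrightarrow> 1 \<le> i \<and> i + 3 \<le> length s \<and> reduce (take 4 (drop (i - 1) s)) = pat"

definition pat_p :: "nat list" where "pat_p = [0,1,0,2]"
definition pat_q :: "nat list" where "pat_q = [0,1,1,2]"

text \<open>One iteration (index i, 1-indexed) of Algorithm A; inp is the original input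
  (used for E_p, E_q), the state is the current sequence and the variable last
  (None = null).\<close>
definition algA_step :: "nat list \<Rightarrow> nat list \<times> nat option \<Rightarrow> nat \<Rightarrow> nat list \<times> nat option" where
  "algA_step inp st i = (let s = fst st; last = snd st in
     if 3 \<le> i \<and> occurs_at pat_p inp (i - 2) then (s[i - 1 := s ! (i - 2)], Some (s ! (i - 1)))
     else if 3 \<le> i \<and> occurs_at pat_q inp (i - 2) then (s[i - 1 := s ! (i - 3)], Some (s ! (i - 1)))
     else if 3 \<le> i \<and> (occurs_at pat_p s (i - 2) \<or> occurs_at pat_q s (i - 2)) then
       (case last of None \<Rightarrow> (s, last)
                   | Some v \<Rightarrow> (s[i - 1 := v], Some (s ! (i - 1))))
     else (s, last))"

definition algA :: "nat list \<Rightarrow> nat list" where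
  "algA e = fst (foldl (algA_step e) (e, None) [1..<length e + 1])"

end

theory Submission
  imports Defs
begin

text \<open>Algorithm A decides the new entry at position \<open>i\<close> from the input window at
  \<open>i-2, \<dots>, i+1\<close>, the two output entries already written before \<open>i\<close> and the register
  \<open>last\<close>. So the run on \<open>\<epsilon>\<close> and the run on \<open>\<epsilon>' = A \<epsilon>\<close> can be followed side by side, one
  position at a time. Before each position, the second run has restored \<open>\<epsilon>\<close> on all earlier
  positions, \<open>\<epsilon>\<close> and \<open>\<epsilon>'\<close> differ in at most one of the two preceding entries, and if
  they do, each run's register holds the value that run overwrote there. A finite case
  analysis of a single step shows that this coupling propagates and that the second run
  writes back the entry of \<open>\<epsilon>\<close>.\<close>

lemma card_filter_less_less_iff:
  fixes x x' :: "'a::linorder"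
  assumes "finite S" "x \<in> S"
  shows "card {y \<in> S. y < x} < card {y \<in> S. y < x'} \<longleftrightarrow> x < x'"
proof
  assume "x < x'"
  with assms(2) have "{y \<in> S. y < x} \<subset> {y \<in> S. y < x'}" by auto
  with assms(1) show "card {y \<in> S. y < x} < card {y \<in> S. y < x'}"
    by (simp add: psubset_card_mono)
next
  assume "card {y \<in> S. y < x} < card {y \<in> S. y < x'}"
  moreover have "card {y \<in> S. y < x'} \<le> card {y \<in> S. y < x}" if "x' \<le> x"
    using assms(1) that by (intro card_mono) auto
  ultimately show "x < x'" by (meson linorder_not_le)
qed

lemma reduce_nth_less_iff:
  assumes "i < length w" "j < length w"
  shows "reduce w ! i < reduce w ! j \<longleftrightarrow> w ! i < w ! j"
  using assms card_filter_less_less_iff[of "set w" "w ! i" "w ! j"] by (simp add: reduce_def)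

definition matches_p :: "nat \<Rightarrow> nat \<Rightarrow> nat \<Rightarrow> nat \<Rightarrow> bool" where
  "matches_p a b c d \<longleftrightarrow> a < b \<and> c = a \<and> b < d"

definition matches_q :: "nat \<Rightarrow> nat \<Rightarrow> nat \<Rightarrow> nat \<Rightarrow> bool" where
  "matches_q a b c d \<longleftrightarrow> a < b \<and> c = b \<and> b < d"

lemma reduce_eq_pat_p_iff: "reduce [a, b, c, d] = pat_p \<longleftrightarrow> matches_p a b c d"
proof
  assume "reduce [a, b, c, d] = pat_p"
  then have "pat_p ! i < pat_p ! j \<longleftrightarrow> [a, b, c, d] ! i < [a, b, c, d] ! j"
    if "i < 4" "j < 4" for i j
    using reduce_nth_less_iff[of i "[a, b, c, d]" j] that by simp
  from this[of 0 1] this[of 0 2] this[of 2 0] this[of 1 3] show "matches_p a b c d"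
    by (simp add: pat_p_def matches_p_def)
next
  assume "matches_p a b c d"
  then have "c = a" "a < b" "{y \<in> {a, b, d}. y < a} = {}" "{y \<in> {a, b, d}. y < b} = {a}"
    "{y \<in> {a, b, d}. y < d} = {a, b}"
    by (auto simp: matches_p_def)
  then show "reduce [a, b, c, d] = pat_p"
    by (simp add: reduce_def pat_p_def insert_commute)
qed

lemma reduce_eq_pat_q_iff: "reduce [a, b, c, d] = pat_q \<longleftrightarrow> matches_q a b c d"
proof
  assume "reduce [a, b, c, d] = pat_q"
  then have "pat_q ! i < pat_q ! j \<longleftrightarrow> [a, b, c, d] ! i < [a, b, c, d] ! j"
    if "i < 4" "j < 4" for i j
    using reduce_nth_less_iff[of i "[a, b, c, d]" j] that by simp
  from this[of 0 1] this[of 1 2] this[of 2 1] this[of 1 3] show "matches_q a b c d"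
    by (simp add: pat_q_def matches_q_def)
next
  assume "matches_q a b c d"
  then have "c = b" "a < b" "{y \<in> {a, b, d}. y < a} = {}" "{y \<in> {a, b, d}. y < b} = {a}"
    "{y \<in> {a, b, d}. y < d} = {a, b}"
    by (auto simp: matches_q_def)
  then show "reduce [a, b, c, d] = pat_q"
    by (simp add: reduce_def pat_q_def insert_commute)
qed

lemma take_4_drop:
  "i + 3 < length s \<Longrightarrow> take 4 (drop i s) = [s ! i, s ! (i + 1), s ! (i + 2), s ! (i + 3)]"
  by (simp add: numeral_eq_Suc Cons_nth_drop_Suc[symmetric] take_Suc_conv_app_nth)

lemma occurs_at_iff_window:
  assumes "2 \<le> t"
  shows "occurs_at pat s (t - 1) \<longleftrightarrow>
    t + 1 < length s \<and> reduce [s ! (t - 2), s ! (t - 1), s ! t, s ! (t + 1)] = pat"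
proof (cases "t + 1 < length s")
  case True
  with assms take_4_drop[of "t - 2" s]
  have "take 4 (drop (t - 2) s) = [s ! (t - 2), s ! (t - 1), s ! t, s ! (t + 1)]"
    by (simp add: numeral_eq_Suc Suc_diff_Suc)
  with assms True show ?thesis
    by (auto simp add: occurs_at_def numeral_eq_Suc)
qed (use assms in \<open>auto simp: occurs_at_def\<close>)

text \<open>The step of Algorithm A at list index \<open>t\<close>, seen locally: \<open>a b c d\<close> are the input
  entries at \<open>t-2, \<dots>, t+1\<close>, \<open>a' b'\<close> the output entries already written at \<open>t-2, t-1\<close>,
  and \<open>active\<close> tells whether the window of length 4 fits into the sequence.\<close>

definition cell_step ::
  "bool \<Rightarrow> nat \<Rightarrow> nat \<Rightarrow> nat \<Rightarrow> nat \<Rightarrow> nat \<Rightarrow> nat \<Rightarrow> nat option \<Rightarrow> nat \<times> nat option" where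
  "cell_step active a b c d a' b' reg =
     (if \<not> active then (c, reg)
      else if matches_p a b c d then (b', Some c)
      else if matches_q a b c d then (a', Some c)
      else if matches_p a' b' c d \<or> matches_q a' b' c d then
        (case reg of None \<Rightarrow> (c, reg) | Some v \<Rightarrow> (v, Some c))
      else (c, reg))"

text \<open>The state of both runs just before position \<open>t\<close>: \<open>a b\<close> and \<open>a' b'\<close> are the entries
  of \<open>\<epsilon>\<close> and of \<open>\<epsilon>' = A \<epsilon>\<close> at \<open>t-2, t-1\<close>, \<open>c = \<epsilon>\<^sub>t\<close>, and \<open>L\<close>, \<open>M\<close> are the registers of
  the runs on \<open>\<epsilon>\<close> and on \<open>\<epsilon>'\<close>.\<close>

definition coupled ::
  "nat \<Rightarrow> nat \<Rightarrow> nat \<Rightarrow> nat \<Rightarrow> nat \<Rightarrow> nat option \<Rightarrow> nat option \<Rightarrow> bool" where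
  "coupled a b a' b' c L M \<longleftrightarrow>
     a' = a \<and> b' = b
   \<or> a' = a \<and> b' \<noteq> b \<and> b' \<le> a \<and> b \<le> a \<and> a < c \<and> L = Some b \<and> M = Some b'
   \<or> b' = b \<and> a' \<noteq> a \<and> a' < b \<and> a < b \<and> L = Some a \<and> M = Some a'"

lemma coupled_refl: "coupled a b a b c L M"
  by (simp add: coupled_def)

text \<open>The second run at position \<open>t\<close> reads the first run's output at \<open>t+1\<close> in its
  window, which is why the first run's step at \<open>t+1\<close> enters.\<close>

lemma cell_step_inverts:
  assumes "coupled a b a' b' c L M"
    and "cell_step True a b c d a' b' L = (c', L')"
    and "fst (cell_step active b c d g b' c' L') = d'"
    and "cell_step True a' b' c' d' a b M = (c'', M')"
  shows "c'' = c \<and> coupled b c b' c' d L' M'"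
proof -
  from assms(1) consider
      "a' = a" "b' = b"
    | "a' = a" "b' \<noteq> b" "b' \<le> a" "b \<le> a" "a < c" "L = Some b" "M = Some b'"
    | "b' = b" "a' \<noteq> a" "a' < b" "a < b" "L = Some a" "M = Some a'"
    unfolding coupled_def by blast
  then show ?thesis
    using assms(2-4) unfolding coupled_def cell_step_def matches_p_def matches_q_def
    by cases (cases active; simp split: if_split_asm option.splits; auto)+
qed

definition algA_state :: "nat list \<Rightarrow> nat \<Rightarrow> nat list \<times> nat option" where
  "algA_state e k = foldl (algA_step e) (e, None) [1..<k + 1]"

lemma algA_state_0: "algA_state e 0 = (e, None)"
  by (simp add: algA_state_def)

lemma algA_state_Suc: "algA_state e (Suc k) = algA_step e (algA_state e k) (Suc k)"
  by (simp add: algA_state_def)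

lemma algA_eq_fst_state: "algA e = fst (algA_state e (length e))"
  by (simp add: algA_def algA_state_def)

lemma length_algA_step: "length (fst (algA_step inp sl i)) = length (fst sl)"
  by (simp add: algA_step_def Let_def split: option.splits)

lemma algA_step_nth_other: "m \<noteq> i - 1 \<Longrightarrow> fst (algA_step inp sl i) ! m = fst sl ! m"
  by (simp add: algA_step_def Let_def split: option.splits)

lemma length_algA_state: "length (fst (algA_state e k)) = length e"
  by (induction k) (simp_all add: algA_state_0 algA_state_Suc length_algA_step)

lemma length_algA: "length (algA e) = length e"
  by (simp add: algA_eq_fst_state length_algA_state)

lemma algA_state_nth_unvisited: "k \<le> m \<Longrightarrow> fst (algA_state e k) ! m = e ! m"
  by (induction k) (simp_all add: algA_state_0 algA_state_Suc algA_step_nth_other)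

lemma algA_state_nth_visited:
  assumes "m < k" "k \<le> length e"
  shows "fst (algA_state e k) ! m = algA e ! m"
proof -
  have "fst (algA_state e k') ! m = fst (algA_state e k) ! m" if "k \<le> k'" for k'
    using that \<open>m < k\<close>
    by (induction k' rule: dec_induct) (auto simp: algA_state_Suc algA_step_nth_other)
  from this[of "length e"] assms(2) show ?thesis
    by (simp add: algA_eq_fst_state)
qed

lemma algA_nth_cell_step:
  assumes "t < length e"
  shows "(algA e ! t, snd (algA_state e (Suc t))) =
    cell_step (2 \<le> t \<and> t + 1 < length e) (e ! (t - 2)) (e ! (t - 1)) (e ! t) (e ! (t + 1))
      (algA e ! (t - 2)) (algA e ! (t - 1)) (snd (algA_state e t))"
proof -
  obtain s L where state: "algA_state e t = (s, L)" by fastforce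
  have length_s: "length s = length e"
    using length_algA_state[of e t] state by simp
  have unvisited: "s ! t = e ! t" "s ! (t + 1) = e ! (t + 1)"
    using algA_state_nth_unvisited[of t t e] algA_state_nth_unvisited[of t "t + 1" e] state
    by auto
  have visited: "s ! (t - 1) = algA e ! (t - 1)" "s ! (t - 2) = algA e ! (t - 2)" if "2 \<le> t"
    using algA_state_nth_visited[of "t - 1" t e] algA_state_nth_visited[of "t - 2" t e]
      assms state that
    by auto
  have algA_t: "algA e ! t = fst (algA_step e (s, L) (Suc t)) ! t"
    using algA_state_nth_visited[of t "Suc t" e] assms state by (simp add: algA_state_Suc)
  show ?thesis
  proof (cases "2 \<le> t \<and> t + 1 < length e")
    case False
    with length_s have "algA_step e (s, L) (Suc t) = (s, L)"
      by (auto simp: algA_step_def occurs_at_def)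
    with False algA_t unvisited state show ?thesis
      by (simp add: algA_state_Suc cell_step_def)
  next
    case True
    have "occurs_at pat e (t - 1) \<longleftrightarrow> reduce [e ! (t - 2), e ! (t - 1), e ! t, e ! (t + 1)] = pat"
      for pat
      using occurs_at_iff_window[of t pat e] True by simp
    moreover have "occurs_at pat s (t - 1) \<longleftrightarrow>
        reduce [algA e ! (t - 2), algA e ! (t - 1), e ! t, e ! (t + 1)] = pat" for pat
      using occurs_at_iff_window[of t pat s] True length_s unvisited visited by simp
    moreover have "Suc t - 2 = t - 1" "Suc t - 3 = t - 2" "3 \<le> Suc t"
      using True by auto
    ultimately show ?thesis
      using True length_s assms algA_t unvisited visited state
      by (auto simp: algA_state_Suc algA_step_def cell_step_def
          reduce_eq_pat_p_iff reduce_eq_pat_q_iff split: option.splits)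
  qed
qed

lemma algA_nth_inactive:
  assumes "t < length e" "\<not> (2 \<le> t \<and> t + 1 < length e)"
  shows "algA e ! t = e ! t"
  using algA_nth_cell_step[OF assms(1)] assms(2) by (simp add: cell_step_def)

lemma algA_algA_coupled:
  assumes "2 \<le> t" "t < length e"
  defines "e' \<equiv> algA e"
  shows "algA e' ! (t - 2) = e ! (t - 2) \<and> algA e' ! (t - 1) = e ! (t - 1) \<and>
    coupled (e ! (t - 2)) (e ! (t - 1)) (e' ! (t - 2)) (e' ! (t - 1)) (e ! t)
      (snd (algA_state e t)) (snd (algA_state e' t))"
proof -
  have length_e': "length e' = length e"
    by (simp add: e'_def length_algA)
  from assms(1,2) show ?thesis
  proof (induction t rule: nat_induct_at_least)
    case base
    with length_e' have "0 < length e" "1 < length e" "0 < length e'" "1 < length e'"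
      by linarith+
    then have "e' ! 0 = e ! 0" "e' ! 1 = e ! 1" "algA e' ! 0 = e' ! 0" "algA e' ! 1 = e' ! 1"
      using algA_nth_inactive[of 0 e] algA_nth_inactive[of 1 e]
        algA_nth_inactive[of 0 e'] algA_nth_inactive[of 1 e']
      by (simp_all add: e'_def)
    then show ?case
      by (simp add: coupled_refl)
  next
    case (Suc t)
    then have active: "2 \<le> t" "t + 1 < length e"
      by simp_all
    from Suc.IH active have IH:
      "algA e' ! (t - 2) = e ! (t - 2)" "algA e' ! (t - 1) = e ! (t - 1)"
      "coupled (e ! (t - 2)) (e ! (t - 1)) (e' ! (t - 2)) (e' ! (t - 1)) (e ! t)
        (snd (algA_state e t)) (snd (algA_state e' t))"
      by simp_all
    have first_t: "cell_step True (e ! (t - 2)) (e ! (t - 1)) (e ! t) (e ! (t + 1))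
        (e' ! (t - 2)) (e' ! (t - 1)) (snd (algA_state e t)) = (e' ! t, snd (algA_state e (Suc t)))"
      using algA_nth_cell_step[of t e] active by (simp add: e'_def)
    have first_Suc_t: "fst (cell_step (2 \<le> Suc t \<and> Suc t + 1 < length e)
        (e ! (t - 1)) (e ! t) (e ! (t + 1)) (e ! (t + 2)) (e' ! (t - 1)) (e' ! t)
        (snd (algA_state e (Suc t)))) = e' ! (t + 1)"
      using algA_nth_cell_step[of "Suc t" e, symmetric] active
      by (simp add: e'_def numeral_eq_Suc Suc_diff_Suc)
    have second_t: "cell_step True (e' ! (t - 2)) (e' ! (t - 1)) (e' ! t) (e' ! (t + 1))
        (e ! (t - 2)) (e ! (t - 1)) (snd (algA_state e' t))
        = (algA e' ! t, snd (algA_state e' (Suc t)))"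
      using algA_nth_cell_step[of t e'] active length_e' IH(1,2) by simp
    from cell_step_inverts[OF IH(3) first_t first_Suc_t second_t] IH(2) active
    show ?case
      by (simp add: numeral_eq_Suc Suc_diff_Suc)
  qed
qed

theorem theorem4:
  fixes e :: "nat list"
  assumes "inversion_seq e"
  shows "algA (algA e) = e"
proof (rule nth_equalityI)
  show "length (algA (algA e)) = length e"
    by (simp add: length_algA)
next
  fix t
  assume "t < length (algA (algA e))"
  then have t: "t < length e"
    by (simp add: length_algA)
  show "algA (algA e) ! t = e ! t"
  proof (cases "2 \<le> t \<and> t + 1 < length e")
    case True
    with algA_algA_coupled[of "t + 1" e] show ?thesis
      by simp
  next
    case False
    with t algA_nth_inactive[of t e] algA_nth_inactive[of t "algA e"] show ?thesis
      by (simp add: length_algA)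
  qed
qed

end
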